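(* Let $0<\alpha<1$, $\bar\alpha=1-\alpha$, $c=(1+\bar\alpha\alpha^{\alpha/\bar\alpha})^{-1}$. Define functions $P_0,P_1$ on $\{0,1\}^n$ for all $n\ge0$ recursively by $P_0(\emptyset)=P_1(\emptyset)=1$ and, for $u\in\{0,1\}^{n-1}$, $P_0(0,u)=c\big(P_0(u)-\alpha^{1/\bar\alpha}P_1(u)\big)$, $P_0(1,u)=c\,\alpha^{\alpha/\bar\alpha}P_1(u)$, $P_1(0,u)=c\,\alpha^{\alpha/\bar\alpha}P_0(u)$, $P_1(1,u)=c\big(P_1(u)-\alpha^{1/\bar\alpha}P_0(u)\big)$. Then there exists $\beta$ with $1\le\beta\le\alpha^{-1/\bar\alpha}$ such that for every $n\ge1$: if $\beta P_1(u)\ge P_0(u)$ and $\beta P_0(u)\ge P_1(u)$ for all $u\in\{0,1\}^{n-1}$, then $\beta P_1(x)\ge P_0(x)$ and $\beta P_0(x)\ge P_1(x)$ for all $x\in\{0,1\}^n$.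
   Context: $(0,u)$ denotes the sequence with first coordinate $0$ followed by $u$. *)

theory Defs
  imports Complex_Main
begin

text \<open>Binary words in {0,1}^n are bool lists of length n (False = 0, True = 1);
  the first coordinate is the head of the list.
  P a False u = P_0(u), P a True u = P_1(u), for parameter alpha = a.\<close>

definition cst :: "real \<Rightarrow> real" where
  "cst a = 1 / (1 + (1 - a) * a powr (a / (1 - a)))"

fun P :: "real \<Rightarrow> bool \<Rightarrow> bool list \<Rightarrow> real" where
  "P a b [] = 1"
| "P a False (False # u) = cst a * (P a False u - a powr (1 / (1 - a)) * P a True u)"
| "P a False (True # u) = cst a * a powr (a / (1 - a)) * P a True u"
| "P a True (False # u) = cst a * a powr (a / (1 - a)) * P a False u"
| "P a True (True # u) = cst a * (P a True u - a powr (1 / (1 - a)) * P a False u)"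

end

theory Submission
  imports Defs
begin

text \<open>Write \<open>A = \<alpha>\<^bsup>\<alpha>/(1-\<alpha>)\<^esup>\<close> and \<open>B = \<alpha>\<^bsup>1/(1-\<alpha>)\<^esup> = \<alpha>A\<close>. One step of the recursion maps
  \<open>(p, q) = (P\<^sub>0(u), P\<^sub>1(u))\<close> to \<open>c(p - Bq, Ap)\<close> or \<open>c(Aq, q - Bp)\<close>, so the two-sided ratio
  bound \<open>p \<le> \<beta>q, q \<le> \<beta>p\<close> is preserved as soon as \<open>A\<beta>\<^sup>2 - \<beta> + B \<ge> 0\<close> and
  \<open>B\<beta>\<^sup>2 - \<beta> + A \<le> 0\<close>. Taking \<open>\<beta> = k/B\<close> with \<open>k\<close> the larger root of \<open>k\<^sup>2 - k + AB = 0\<close>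
  makes the second an equality and the first reduce to \<open>k \<ge> (1 + \<alpha>)AB\<close>; both need
  \<open>AB = \<alpha>\<^bsup>(1+\<alpha>)/(1-\<alpha>)\<^esup> \<le> 1/4\<close>, which follows from \<open>ln \<alpha> \<le> 2(\<alpha> - 1)/(\<alpha> + 1)\<close>.\<close>

definition ratio_bounded :: "real \<Rightarrow> real \<Rightarrow> real \<Rightarrow> bool" where
  "ratio_bounded b p q \<longleftrightarrow> p \<le> b * q \<and> q \<le> b * p"

lemma ratio_bounded_commute: "ratio_bounded b p q \<longleftrightarrow> ratio_bounded b q p"
  unfolding ratio_bounded_def by blast

lemma ratio_bounded_scale:
  assumes "c \<ge> 0" and "ratio_bounded b p q"
  shows "ratio_bounded b (c * p) (c * q)"
  using assms mult_left_mono[of _ _ c] unfolding ratio_bounded_def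
  by (metis mult.left_commute)

lemma ratio_bounded_nonneg:
  assumes "b > 1" and "ratio_bounded b p q"
  shows "p \<ge> 0"
proof -
  have "p \<le> b * (b * p)"
    using assms mult_left_mono[of q "b * p" b] unfolding ratio_bounded_def
    by (meson less_le_not_le nle_le order_trans zero_le_one)
  then have "(b * b - 1) * p \<ge> 0" by (simp add: algebra_simps)
  moreover have "b * b - 1 > 0"
    using \<open>b > 1\<close> by (metis diff_gt_0_iff_gt less_1_mult)
  ultimately show ?thesis by (simp add: zero_le_mult_iff)
qed

lemma ratio_bounded_step:
  assumes "b > 1" and "A > 0" and "B > 0"
    and lower: "A * b\<^sup>2 - b + B \<ge> 0" and upper: "B * b\<^sup>2 - b + A \<le> 0"
    and "ratio_bounded b p q"
  shows "ratio_bounded b (p - B * q) (A * p)"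
proof -
  have "p \<ge> 0"
    using ratio_bounded_nonneg assms by blast
  have q_le: "q \<le> b * p" and p_le: "p \<le> b * q"
    using \<open>ratio_bounded b p q\<close> unfolding ratio_bounded_def by auto
  have "b * (b * (A * p) - (p - B * q)) = (A * b\<^sup>2 - b) * p + B * (b * q)"
    by (simp add: algebra_simps power2_eq_square)
  also have "\<dots> \<ge> (A * b\<^sup>2 - b + B) * p"
    using p_le \<open>B > 0\<close> by (simp add: algebra_simps)
  finally have "b * (b * (A * p) - (p - B * q)) \<ge> 0"
    using lower \<open>p \<ge> 0\<close> by (meson order_trans zero_le_mult_iff)
  then have "p - B * q \<le> b * (A * p)"
    using \<open>b > 1\<close> by (simp add: zero_le_mult_iff)
  moreover have "b * (p - B * q) - A * p \<ge> - (B * b\<^sup>2 - b + A) * p"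
    using mult_left_mono[OF q_le, of "b * B"] \<open>b > 1\<close> \<open>B > 0\<close>
    by (simp add: algebra_simps power2_eq_square)
  then have "A * p \<le> b * (p - B * q)"
    using upper \<open>p \<ge> 0\<close> by (smt (verit) mult_nonneg_nonneg)
  ultimately show ?thesis
    unfolding ratio_bounded_def by simp
qed

lemma ln_le_two_mul_diff_div_add:
  fixes a :: real
  assumes "0 < a" and "a \<le> 1"
  shows "ln a \<le> 2 * (a - 1) / (a + 1)"
proof -
  let ?f = "\<lambda>x::real. ln x - 2 * (x - 1) / (x + 1)"
  have "?f a \<le> ?f 1"
  proof (rule DERIV_nonneg_imp_nondecreasing[OF \<open>a \<le> 1\<close>])
    fix x :: real
    assume "a \<le> x"
    then have "x > 0" using \<open>0 < a\<close> by simp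
    have "DERIV ?f x :> 1 / x - 4 / (x + 1)\<^sup>2"
      using \<open>x > 0\<close> by (auto intro!: derivative_eq_intros simp: power2_eq_square field_simps)
    moreover have "1 / x - 4 / (x + 1)\<^sup>2 = (x - 1)\<^sup>2 / (x * (x + 1)\<^sup>2)"
      using \<open>x > 0\<close> add_pos_pos[OF \<open>x > 0\<close> zero_less_one]
      by (simp add: divide_simps) (simp add: power2_eq_square algebra_simps)
    ultimately show "\<exists>y. DERIV ?f x :> y \<and> y \<ge> 0"
      using \<open>x > 0\<close> by auto
  qed
  then show ?thesis by simp
qed

lemma powr_one_div_one_minus:
  fixes \<alpha> :: real
  assumes "0 < \<alpha>" and "\<alpha> < 1"
  shows "\<alpha> powr (1 / (1 - \<alpha>)) = \<alpha> * \<alpha> powr (\<alpha> / (1 - \<alpha>))"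
proof -
  have "1 / (1 - \<alpha>) = 1 + \<alpha> / (1 - \<alpha>)" using assms by (simp add: field_simps)
  then show ?thesis using assms by (simp only: powr_add) simp
qed

lemma mult_powr_div_one_minus_sq_le_quarter:
  fixes \<alpha> :: real
  assumes "0 < \<alpha>" and "\<alpha> < 1"
  shows "\<alpha> * (\<alpha> powr (\<alpha> / (1 - \<alpha>)))\<^sup>2 \<le> 1 / 4"
proof -
  have "(1 + \<alpha>) / (1 - \<alpha>) = 1 / (1 - \<alpha>) + \<alpha> / (1 - \<alpha>)" using assms by (simp add: field_simps)
  then have "\<alpha> * (\<alpha> powr (\<alpha> / (1 - \<alpha>)))\<^sup>2 = \<alpha> powr ((1 + \<alpha>) / (1 - \<alpha>))"
    using powr_one_div_one_minus[OF assms] by (simp only: powr_add power2_eq_square mult.assoc)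
  also have "\<dots> = exp ((1 + \<alpha>) / (1 - \<alpha>) * ln \<alpha>)"
    using assms by (simp add: powr_def)
  also have "(1 + \<alpha>) / (1 - \<alpha>) * ln \<alpha> \<le> (1 + \<alpha>) / (1 - \<alpha>) * (2 * (\<alpha> - 1) / (\<alpha> + 1))"
    using assms ln_le_two_mul_diff_div_add[of \<alpha>] by (intro mult_left_mono) auto
  also have "\<dots> = - 2"
    using assms by (simp add: divide_simps) (simp add: algebra_simps)
  also have "\<dots> \<le> ln (1 / 4)"
    using ln_2_less_1 ln_realpow[of 2 2] by (simp add: ln_div)
  finally show ?thesis by simp
qed

lemma exists_ratio_bound:
  fixes \<alpha> A :: real
  assumes "0 < \<alpha>" and "\<alpha> < 1" and "A > 0" and quarter: "\<alpha> * A\<^sup>2 \<le> 1 / 4"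
  obtains b where "1 < b" and "b \<le> 1 / (\<alpha> * A)"
    and "A * b\<^sup>2 - b + \<alpha> * A \<ge> 0" and "\<alpha> * A * b\<^sup>2 - b + A \<le> 0"
proof -
  define Q where "Q = \<alpha> * A\<^sup>2"
  define k where "k = (1 + sqrt (1 - 4 * Q)) / 2"
  define b where "b = k / (\<alpha> * A)"
  have "Q > 0" unfolding Q_def using assms by simp
  then have "Q \<ge> 0" by simp
  then have k_half: "k \<ge> 1 / 2" and "k \<le> 1" and k_root: "k\<^sup>2 = k - Q"
    using quarter unfolding k_def Q_def by (auto simp: power2_eq_square field_simps)
  have "\<alpha> * A > 0" using assms by simp
  have "(\<alpha> * A)\<^sup>2 = \<alpha> * Q" unfolding Q_def by (simp add: power2_eq_square)
  also have "\<dots> < Q" using mult_strict_right_mono[OF \<open>\<alpha> < 1\<close> \<open>Q > 0\<close>] by simp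
  also have "\<dots> \<le> (1 / 2)\<^sup>2" using quarter unfolding Q_def by (simp add: power2_eq_square)
  finally have "\<alpha> * A < 1 / 2"
    by (rule power_less_imp_less_base) simp
  then have "1 < b" unfolding b_def using \<open>\<alpha> * A > 0\<close> k_half by simp
  moreover have "b \<le> 1 / (\<alpha> * A)"
    unfolding b_def using \<open>\<alpha> * A > 0\<close> \<open>k \<le> 1\<close> by (simp add: divide_right_mono)
  moreover have "\<alpha> * A * b\<^sup>2 - b + A \<le> 0"
  proof -
    have "\<alpha> * A * b\<^sup>2 - b + A = (k\<^sup>2 - k + Q) / (\<alpha> * A)"
      unfolding b_def Q_def using assms by (simp add: power2_eq_square field_simps)
    then show ?thesis using k_root by simp
  qed
  moreover have "A * b\<^sup>2 - b + \<alpha> * A \<ge> 0"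
  proof -
    have "A * b\<^sup>2 - b + \<alpha> * A = (1 - \<alpha>) * (k - (1 + \<alpha>) * Q) / (\<alpha>\<^sup>2 * A)"
      unfolding b_def using assms k_root
      by (simp add: Q_def power2_eq_square field_simps)
    moreover have "(1 + \<alpha>) * Q \<le> 1 / 2"
      using mult_mono[of "1 + \<alpha>" 2 Q "1 / 4"] quarter \<open>Q \<ge> 0\<close> \<open>\<alpha> < 1\<close>
      unfolding Q_def by simp
    ultimately show ?thesis using assms k_half by simp
  qed
  ultimately show ?thesis using that by simp
qed

lemma ratio_bounded_P_Cons:
  fixes \<alpha> b :: real
  defines "A \<equiv> \<alpha> powr (\<alpha> / (1 - \<alpha>))" and "B \<equiv> \<alpha> powr (1 / (1 - \<alpha>))"
  assumes "0 < \<alpha>" and "\<alpha> < 1" and "b > 1"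
    and "A * b\<^sup>2 - b + B \<ge> 0" and "B * b\<^sup>2 - b + A \<le> 0"
    and bounded: "ratio_bounded b (P \<alpha> False u) (P \<alpha> True u)"
  shows "ratio_bounded b (P \<alpha> False (x # u)) (P \<alpha> True (x # u))"
proof -
  have "A > 0" "B > 0" unfolding A_def B_def using \<open>0 < \<alpha>\<close> by auto
  have "cst \<alpha> \<ge> 0"
    unfolding cst_def A_def[symmetric] using \<open>A > 0\<close> \<open>\<alpha> < 1\<close> by simp
  note step = ratio_bounded_scale[OF \<open>cst \<alpha> \<ge> 0\<close>
      ratio_bounded_step[OF \<open>b > 1\<close> \<open>A > 0\<close> \<open>B > 0\<close> assms(6,7)]]
  show ?thesis
  proof (cases x)
    case False
    show ?thesis
      using step[OF bounded] \<open>\<not> x\<close> unfolding A_def B_def by (simp only: P.simps mult.assoc)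
  next
    case True
    have "ratio_bounded b (P \<alpha> True (x # u)) (P \<alpha> False (x # u))"
      using step[OF ratio_bounded_commute[THEN iffD1, OF bounded]] \<open>x\<close>
      unfolding A_def B_def by (simp only: P.simps mult.assoc)
    then show ?thesis by (rule ratio_bounded_commute[THEN iffD1])
  qed
qed

theorem lemma4:
  fixes \<alpha> :: real
  assumes "0 < \<alpha>" and "\<alpha> < 1"
  shows "\<exists>\<beta>::real. 1 \<le> \<beta> \<and> \<beta> \<le> \<alpha> powr (- 1 / (1 - \<alpha>)) \<and>
    (\<forall>n::nat. n \<ge> 1 \<longrightarrow>
      (\<forall>u. length u = n - 1 \<longrightarrow> \<beta> * P \<alpha> True u \<ge> P \<alpha> False u \<and> \<beta> * P \<alpha> False u \<ge> P \<alpha> True u)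
      \<longrightarrow> (\<forall>x. length x = n \<longrightarrow> \<beta> * P \<alpha> True x \<ge> P \<alpha> False x \<and> \<beta> * P \<alpha> False x \<ge> P \<alpha> True x))"
proof -
  define A where "A = \<alpha> powr (\<alpha> / (1 - \<alpha>))"
  have "A > 0" unfolding A_def using assms by simp
  have B: "\<alpha> powr (1 / (1 - \<alpha>)) = \<alpha> * A"
    unfolding A_def using powr_one_div_one_minus[OF assms] .
  have "\<alpha> * A\<^sup>2 \<le> 1 / 4"
    unfolding A_def using mult_powr_div_one_minus_sq_le_quarter[OF assms] .
  obtain \<beta> where "1 < \<beta>" "\<beta> \<le> 1 / (\<alpha> * A)"
    and bounds: "A * \<beta>\<^sup>2 - \<beta> + \<alpha> * A \<ge> 0" "\<alpha> * A * \<beta>\<^sup>2 - \<beta> + A \<le> 0"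
    using exists_ratio_bound[OF assms \<open>A > 0\<close> \<open>\<alpha> * A\<^sup>2 \<le> 1 / 4\<close>] .
  have "\<alpha> powr (- 1 / (1 - \<alpha>)) = 1 / (\<alpha> * A)"
    using B by (simp add: minus_divide_left[symmetric] powr_minus divide_inverse)
  moreover have "ratio_bounded \<beta> (P \<alpha> False (x # u)) (P \<alpha> True (x # u))"
    if "ratio_bounded \<beta> (P \<alpha> False u) (P \<alpha> True u)" for x u
    using ratio_bounded_P_Cons[OF assms \<open>1 < \<beta>\<close>] bounds that by (simp add: A_def B)
  ultimately show ?thesis
    using \<open>1 < \<beta>\<close> \<open>\<beta> \<le> 1 / (\<alpha> * A)\<close> unfolding ratio_bounded_def
    by (intro exI[of _ \<beta>]) (auto simp: length_Suc_conv Suc_le_eq gr0_conv_Suc)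
qed

end
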